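(* Let $\mathbf{c}\in\mathbb{R}^n$, $\mathcal{K}=\{1,\dots,K\}$ with $K\ge2$, and for each $k\in\mathcal{K}$ let $\mathcal{F}_k=\bigcup_{i\in\mathcal{D}_k}\mathcal{C}_{ki}$ with $\mathcal{D}_k$ finite and each $\mathcal{C}_{ki}\subset\mathbb{R}^n$ compact and convex. Let $$z^{HR}_{\mathcal{K}}=\inf\{\mathbf{c}^\top\mathbf{x}:\ \mathbf{x}=\mathbf{v}_k,\ \mathbf{v}_k\in\operatorname{cl}\operatorname{conv}(\mathcal{F}_k)\ \forall k\in\mathcal{K}\}$$ be the hull relaxation value and let $\boldsymbol{\lambda}_1^*,\dots,\boldsymbol{\lambda}_K^*$ be optimal Lagrange multipliers of this hull relaxation for the constraints $\mathbf{x}=\mathbf{v}_k$. For two disjunctions, which after relabeling are $k=K-1$ and $l=K$, let the basic step replace $\mathcal{F}_{K-1}$ and $\mathcal{F}_K$ by the single disjunction $\mathcal{F}_{K-1}\cap\mathcal{F}_K=\bigcup_{i\in\mathcal{D}_{K-1},\,j\in\mathcal{D}_K}(\mathcal{C}_{K-1,i}\cap\mathcal{C}_{K,j})$, and let $$z'=\inf\{\mathbf{c}^\top\mathbf{x}:\ \mathbf{x}\in\operatorname{cl}\operatorname{conv}(\mathcal{F}_k)\ \forall k\le K-2,\ \mathbf{x}\in\operatorname{cl}\operatorname{conv}(\mathcal{F}_{K-1}\cap\mathcal{F}_K)\}$$ be the hull relaxation value after the basic step, with bound improvement $\Delta(K-1,K)=z'-z^{HR}_{\mathcal{K}}$. Then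 $$\Delta(K-1,K)\ \ge\ L_{\{\{1\},\dots,\{K-2\},\{K-1,K\}\}}\big(\boldsymbol{\lambda}_1^*,\dots,\boldsymbol{\lambda}_{K-2}^*,\boldsymbol{\lambda}_{K-1}^*+\boldsymbol{\lambda}_K^*\big)-LR_{\mathcal{K}}(\boldsymbol{\lambda}_1^*,\dots,\boldsymbol{\lambda}_K^* )\ \ge\ 0.$$
   Context: $\operatorname{cl}\operatorname{conv}$ is the closed convex hull. Optimal Lagrange multipliers of the hull relaxation means: $z^{HR}_{\mathcal{K}}$ is finite and equals $\inf\{(\mathbf{c}-\sum_k\boldsymbol{\lambda}_k^* )^\top\mathbf{x}+\sum_k\boldsymbol{\lambda}_k^{*\top}\mathbf{v}_k:\mathbf{x}\in\mathbb{R}^n,\mathbf{v}_k\in\operatorname{cl}\operatorname{conv}(\mathcal{F}_k)\}$. The Lagrangian relaxation is $LR_{\mathcal{K}}(\boldsymbol{\lambda}_1,\dots,\boldsymbol{\lambda}_K)=\inf\{(\mathbf{c}-\sum_k\boldsymbol{\lambda}_k)^\top\mathbf{x}+\sum_k\boldsymbol{\lambda}_k^\top\mathbf{v}_k:\mathbf{x}\in\mathbb{R}^n,\ \mathbf{v}_k\in\mathcal{F}_k\ \forall k\}$. For a partition $\mathcal{P}=\{\mathcal{J}_1,\dots,\mathcal{J}_P\}$ of $\mathcal{K}$ and $\boldsymbol{\mu}_p\in\mathbb{R}^n$, the partition relaxation is $L_{\mathcal{P}}(\boldsymbol{\mu}_1,\dots,\boldsymbol{\mu}_P)=\sum_{p=1}^P\min\{\boldsymbol{\mu}_p^\top\mathbf{v}:\mathbf{v}\in\bigcap_{k\in\mathcal{J}_p}\mathcal{F}_k\}$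 (minimum over the empty set is $+\infty$). *)

theory Defs
  imports "HOL-Analysis.Analysis" "HOL-Library.Extended_Real"
begin

definition hull_relax :: "real^'n \<Rightarrow> nat set \<Rightarrow> (nat \<Rightarrow> (real^'n) set) \<Rightarrow> ereal" where
  "hull_relax c I F =
     Inf {ereal (c \<bullet> x) | x. \<forall>k\<in>I. x \<in> closure (convex hull (F k))}"

definition lagr_relax :: "real^'n \<Rightarrow> nat \<Rightarrow> (nat \<Rightarrow> (real^'n) set) \<Rightarrow> (nat \<Rightarrow> real^'n) \<Rightarrow> ereal" where
  "lagr_relax c K F lam =
     Inf {ereal ((c - (\<Sum>k\<in>{1..K}. lam k)) \<bullet> x + (\<Sum>k\<in>{1..K}. lam k \<bullet> v k)) | x v.
            \<forall>k\<in>{1..K}. v k \<in> F k}"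

definition hull_lagr :: "real^'n \<Rightarrow> nat \<Rightarrow> (nat \<Rightarrow> (real^'n) set) \<Rightarrow> (nat \<Rightarrow> real^'n) \<Rightarrow> ereal" where
  "hull_lagr c K F lam =
     Inf {ereal ((c - (\<Sum>k\<in>{1..K}. lam k)) \<bullet> x + (\<Sum>k\<in>{1..K}. lam k \<bullet> v k)) | x v.
            \<forall>k\<in>{1..K}. v k \<in> closure (convex hull (F k))}"

definition optimal_hull_multipliers :: "real^'n \<Rightarrow> nat \<Rightarrow> (nat \<Rightarrow> (real^'n) set) \<Rightarrow> (nat \<Rightarrow> real^'n) \<Rightarrow> bool" where
  "optimal_hull_multipliers c K F lam \<longleftrightarrow>
     \<bar>hull_relax c {1..K} F\<bar> \<noteq> \<infinity> \<and> hull_relax c {1..K} F = hull_lagr c K F lam"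

text \<open>Partition relaxation L_P(mu): blocks indexed by P, block p is the index set J p;
  sum over blocks of min { mu_p . v : v in the intersection of F_k, k in J p } (inf of empty = +inf).\<close>
definition part_relax :: "(nat \<Rightarrow> (real^'n) set) \<Rightarrow> nat set \<Rightarrow> (nat \<Rightarrow> nat set) \<Rightarrow> (nat \<Rightarrow> real^'n) \<Rightarrow> ereal" where
  "part_relax F P J mu = (\<Sum>p\<in>P. Inf {ereal (mu p \<bullet> v) | v. v \<in> (\<Inter>k\<in>J p. F k)})"

end

theory Submission
  imports Defs
begin

text \<open>Finiteness of the dual value of the hull relaxation forces \<open>c = \<Sum>k \<lambda>\<^sub>k\<close>, since
  otherwise the free variable \<open>x\<close> drives the Lagrangian to \<open>-\<infinity>\<close>. Write \<open>m(a, S)\<close> for the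
  infimum of \<open>a \<bullet> v\<close> over \<open>S\<close>. Taking \<open>x = 0\<close> and minimisers \<open>v\<^sub>k\<close> of \<open>\<lambda>\<^sub>k\<close> over the
  compact sets \<open>F\<^sub>k\<close> shows \<open>LR \<le> \<Sum>k m(\<lambda>\<^sub>k, F\<^sub>k)\<close>, and this is at most the partition
  relaxation because a sum of linear functions, minimised over an intersection, dominates
  the sum of the separate minima. Conversely, for \<open>x\<close> feasible after the basic step,
  \<open>c \<bullet> x = \<Sum>p \<mu>\<^sub>p \<bullet> x\<close> and each \<open>\<mu>\<^sub>p \<bullet> x\<close> is at least \<open>m(\<mu>\<^sub>p, \<Inter>k\<in>J\<^sub>p F\<^sub>k)\<close>, because passing to the
  closed convex hull does not change \<open>m\<close> (half-spaces are closed and convex). Hence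
  \<open>z\<^sup>H\<^sup>R \<le> LR \<le> L\<^sub>P \<le> z'\<close>, from which both inequalities follow.\<close>

definition inf_inner :: "'a::real_inner \<Rightarrow> 'a set \<Rightarrow> ereal" where
  "inf_inner a S = (INF v\<in>S. ereal (a \<bullet> v))"

lemma inf_inner_le: "v \<in> S \<Longrightarrow> inf_inner a S \<le> ereal (a \<bullet> v)"
  unfolding inf_inner_def by (rule INF_lower)

lemma inf_inner_closure_convex_hull:
  fixes a :: "'a::real_inner"
  shows "inf_inner a (closure (convex hull S)) = inf_inner a S"
proof (rule antisym)
  show "inf_inner a (closure (convex hull S)) \<le> inf_inner a S"
    unfolding inf_inner_def
    by (intro INF_superset_mono order_trans[OF hull_subset closure_subset]) auto
  show "inf_inner a S \<le> inf_inner a (closure (convex hull S))"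
    unfolding inf_inner_def[of a "closure _"]
  proof (rule INF_greatest, rule dense_le)
    fix x e assume x: "x \<in> closure (convex hull S)" and e: "e < inf_inner a S"
    show "e \<le> ereal (a \<bullet> x)"
    proof (cases e)
      case (real r)
      have "S \<subseteq> {y. r \<le> a \<bullet> y}"
        using e inf_inner_le[of _ S a] real by (fastforce dest: less_le_trans)
      then have "closure (convex hull S) \<subseteq> {y. r \<le> a \<bullet> y}"
        by (intro closure_minimal hull_minimal) (auto simp: convex_halfspace_ge closed_halfspace_ge)
      with x real show ?thesis by auto
    qed (use e in auto)
  qed
qed

lemma inf_inner_attained:
  fixes a :: "'a::real_inner"
  assumes "compact S" "S \<noteq> {}"
  obtains w where "w \<in> S" "inf_inner a S = ereal (a \<bullet> w)"
proof -
  have "continuous_on S (\<lambda>v. a \<bullet> v)"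
    by (intro continuous_intros)
  then obtain w where w: "w \<in> S" "\<forall>y\<in>S. a \<bullet> w \<le> a \<bullet> y"
    using continuous_attains_inf[OF assms] by blast
  then have "inf_inner a S = ereal (a \<bullet> w)"
    unfolding inf_inner_def by (intro antisym INF_lower INF_greatest) auto
  with w(1) show thesis by (rule that)
qed

lemma sum_inf_inner_le_inf_inner_Inter:
  assumes "finite J"
  shows "(\<Sum>k\<in>J. inf_inner (lam k) (F k)) \<le> inf_inner (\<Sum>k\<in>J. lam k) (\<Inter>k\<in>J. F k)"
  unfolding inf_inner_def[of "sum lam J"]
proof (rule INF_greatest)
  fix v assume "v \<in> (\<Inter>k\<in>J. F k)"
  then have "(\<Sum>k\<in>J. inf_inner (lam k) (F k)) \<le> (\<Sum>k\<in>J. ereal (lam k \<bullet> v))"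
    by (intro sum_mono inf_inner_le) auto
  then show "(\<Sum>k\<in>J. inf_inner (lam k) (F k)) \<le> ereal (sum lam J \<bullet> v)"
    by (simp add: inner_sum_left)
qed

lemma part_relax_inf_inner:
  "part_relax F P J mu = (\<Sum>p\<in>P. inf_inner (mu p) (\<Inter>k\<in>J p. F k))"
proof -
  have image: "{ereal (a \<bullet> v) | v. v \<in> S} = (\<lambda>v. ereal (a \<bullet> v)) ` S" for a S
    by auto
  show ?thesis
    unfolding part_relax_def inf_inner_def by (simp only: image)
qed

lemma sum_inf_inner_le_part_relax:
  assumes "finite P" "\<forall>p\<in>P. finite (J p)" "disjoint_family_on J P"
    and "(\<Union>p\<in>P. J p) = I" "\<forall>p\<in>P. mu p = (\<Sum>k\<in>J p. lam k)"
  shows "(\<Sum>k\<in>I. inf_inner (lam k) (F k)) \<le> part_relax F P J mu"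
proof -
  have "(\<Sum>k\<in>I. inf_inner (lam k) (F k)) = (\<Sum>p\<in>P. \<Sum>k\<in>J p. inf_inner (lam k) (F k))"
    using sum.UNION_disjoint_family[OF assms(1-3)] assms(4) by simp
  also have "\<dots> \<le> (\<Sum>p\<in>P. inf_inner (mu p) (\<Inter>k\<in>J p. F k))"
    using assms(2,5) by (intro sum_mono) (simp add: sum_inf_inner_le_inf_inner_Inter)
  finally show ?thesis by (simp add: part_relax_inf_inner)
qed

lemma part_relax_le_hull_relax:
  assumes "finite P" "c = (\<Sum>p\<in>P. mu p)"
  shows "part_relax F P J mu \<le> hull_relax c P (\<lambda>p. \<Inter>k\<in>J p. F k)"
  unfolding hull_relax_def
proof (rule Inf_greatest, clarify)
  fix x assume x: "\<forall>p\<in>P. x \<in> closure (convex hull (\<Inter>k\<in>J p. F k))"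
  have "part_relax F P J mu = (\<Sum>p\<in>P. inf_inner (mu p) (closure (convex hull (\<Inter>k\<in>J p. F k))))"
    by (simp add: part_relax_inf_inner inf_inner_closure_convex_hull)
  also have "\<dots> \<le> (\<Sum>p\<in>P. ereal (mu p \<bullet> x))"
    using x by (intro sum_mono inf_inner_le) auto
  finally show "part_relax F P J mu \<le> ereal (c \<bullet> x)"
    using assms(2) by (simp add: inner_sum_left)
qed

lemma hull_lagr_le_lagr_relax: "hull_lagr c K F lam \<le> lagr_relax c K F lam"
  unfolding hull_lagr_def lagr_relax_def
  by (rule Inf_superset_mono)
     (blast intro: order_trans[OF hull_subset closure_subset, THEN subsetD])

lemma lagr_relax_le_sum_inf_inner:
  assumes "\<forall>k\<in>{1..K}. compact (F k) \<and> F k \<noteq> {}"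
  shows "lagr_relax c K F lam \<le> (\<Sum>k\<in>{1..K}. inf_inner (lam k) (F k))"
proof -
  have "\<forall>k\<in>{1..K}. \<exists>w. w \<in> F k \<and> inf_inner (lam k) (F k) = ereal (lam k \<bullet> w)"
    using assms by (metis inf_inner_attained)
  then obtain w where w: "\<forall>k\<in>{1..K}. w k \<in> F k \<and> inf_inner (lam k) (F k) = ereal (lam k \<bullet> w k)"
    by (rule bchoice[THEN exE])
  have "lagr_relax c K F lam
      \<le> ereal ((c - (\<Sum>k\<in>{1..K}. lam k)) \<bullet> 0 + (\<Sum>k\<in>{1..K}. lam k \<bullet> w k))"
    unfolding lagr_relax_def using w by (intro Inf_lower) blast
  also have "\<dots> = (\<Sum>k\<in>{1..K}. inf_inner (lam k) (F k))"
    using w by simp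
  finally show ?thesis .
qed

lemma hull_relax_neq_infinity_nonempty:
  assumes "hull_relax c I F \<noteq> \<infinity>" "k \<in> I"
  shows "F k \<noteq> {}"
proof
  assume "F k = {}"
  with assms(2) have "{ereal (c \<bullet> x) | x. \<forall>k\<in>I. x \<in> closure (convex hull (F k))} = {}"
    by fastforce
  with assms(1) show False
    unfolding hull_relax_def by (simp add: top_ereal_def)
qed

lemma hull_lagr_bounded_imp_balanced:
  assumes "\<forall>k\<in>{1..K}. F k \<noteq> {}" "hull_lagr c K F lam \<noteq> -\<infinity>"
  shows "c = (\<Sum>k\<in>{1..K}. lam k)"
proof (rule ccontr)
  define d where "d = c - (\<Sum>k\<in>{1..K}. lam k)"
  assume "c \<noteq> (\<Sum>k\<in>{1..K}. lam k)"
  then have "d \<bullet> d > 0" by (simp add: d_def)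
  obtain v where v: "\<forall>k\<in>{1..K}. v k \<in> F k"
    using bchoice[of "{1..K}" "\<lambda>k v. v \<in> F k"] assms(1) by blast
  have "hull_lagr c K F lam \<le> ereal B" for B
  proof -
    define t where "t = (B - (\<Sum>k\<in>{1..K}. lam k \<bullet> v k)) / (d \<bullet> d)"
    have "hull_lagr c K F lam \<le> ereal (d \<bullet> (t *\<^sub>R d) + (\<Sum>k\<in>{1..K}. lam k \<bullet> v k))"
      unfolding hull_lagr_def d_def using v
      by (intro Inf_lower) (blast intro: order_trans[OF hull_subset closure_subset, THEN subsetD])
    also have "d \<bullet> (t *\<^sub>R d) + (\<Sum>k\<in>{1..K}. lam k \<bullet> v k) = B"
      using \<open>d \<bullet> d > 0\<close> by (simp add: t_def)
    finally show ?thesis .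
  qed
  with assms(2) show False by (metis ereal_bot)
qed

lemma partition_relaxation_bounds:
  fixes F :: "nat \<Rightarrow> (real^'n) set"
  assumes F_compact: "\<forall>k\<in>{1..K}. compact (F k)"
    and optimal: "optimal_hull_multipliers c K F lam"
    and partition: "finite P" "\<forall>p\<in>P. finite (J p)" "disjoint_family_on J P"
      "(\<Union>p\<in>P. J p) = {1..K}"
    and mu: "\<forall>p\<in>P. mu p = (\<Sum>k\<in>J p. lam k)"
  shows "hull_relax c {1..K} F \<le> lagr_relax c K F lam"
    and "lagr_relax c K F lam \<le> part_relax F P J mu"
    and "part_relax F P J mu \<le> hull_relax c P (\<lambda>p. \<Inter>k\<in>J p. F k)"
proof -
  have z_finite: "\<bar>hull_relax c {1..K} F\<bar> \<noteq> \<infinity>"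
    and z_dual: "hull_relax c {1..K} F = hull_lagr c K F lam"
    using optimal by (auto simp: optimal_hull_multipliers_def)
  have F_nonempty: "\<forall>k\<in>{1..K}. F k \<noteq> {}"
    using z_finite hull_relax_neq_infinity_nonempty[of c "{1..K}" F] by auto
  show "hull_relax c {1..K} F \<le> lagr_relax c K F lam"
    using z_dual hull_lagr_le_lagr_relax by simp
  have "lagr_relax c K F lam \<le> (\<Sum>k\<in>{1..K}. inf_inner (lam k) (F k))"
    using F_nonempty F_compact by (intro lagr_relax_le_sum_inf_inner) auto
  also have "\<dots> \<le> part_relax F P J mu"
    using partition mu by (rule sum_inf_inner_le_part_relax)
  finally show "lagr_relax c K F lam \<le> part_relax F P J mu" .
  have "c = (\<Sum>k\<in>{1..K}. lam k)"
    using F_nonempty z_finite z_dual by (intro hull_lagr_bounded_imp_balanced) auto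
  also have "\<dots> = (\<Sum>p\<in>P. mu p)"
    using sum.UNION_disjoint_family[OF partition(1-3)] partition(4) mu by simp
  finally show "part_relax F P J mu \<le> hull_relax c P (\<lambda>p. \<Inter>k\<in>J p. F k)"
    using partition(1) by (intro part_relax_le_hull_relax)
qed

lemma ereal_diff_chain:
  fixes z L P z' :: ereal
  assumes "\<bar>z\<bar> \<noteq> \<infinity>" "z \<le> L" "L \<le> P" "P \<le> z'"
  shows "P - L \<le> z' - z \<and> 0 \<le> P - L"
proof -
  obtain r where z: "z = ereal r"
    using assms(1) by (cases z) auto
  have "P - L \<le> P - z"
    using assms(2) z by (simp add: ereal_minus_mono)
  also have "\<dots> \<le> z' - z"
    using assms(4) z by (simp add: ereal_minus_mono)
  finally show ?thesis
    using assms(2,3) z by (cases L; cases P) auto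
qed

theorem corollary1:
  fixes c :: "real^'n" and K :: nat
    and D :: "nat \<Rightarrow> 'i set" and C :: "nat \<Rightarrow> 'i \<Rightarrow> (real^'n) set"
    and lam :: "nat \<Rightarrow> real^'n"
  assumes "K \<ge> 2"
    and "\<forall>k\<in>{1..K}. finite (D k)"
    and "\<forall>k\<in>{1..K}. \<forall>i\<in>D k. compact (C k i) \<and> convex (C k i)"
    and "optimal_hull_multipliers c K (\<lambda>k. \<Union>i\<in>D k. C k i) lam"
  shows "hull_relax c {1..K-1}
           (\<lambda>k. if k = K - 1 then (\<Union>i\<in>D (K-1). C (K-1) i) \<inter> (\<Union>j\<in>D K. C K j)
                 else (\<Union>i\<in>D k. C k i))
         - hull_relax c {1..K} (\<lambda>k. \<Union>i\<in>D k. C k i)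
       \<ge> part_relax (\<lambda>k. \<Union>i\<in>D k. C k i) {1..K-1}
           (\<lambda>p. if p = K - 1 then {K-1, K} else {p})
           (\<lambda>p. if p = K - 1 then lam (K-1) + lam K else lam p)
         - lagr_relax c K (\<lambda>k. \<Union>i\<in>D k. C k i) lam
     \<and> part_relax (\<lambda>k. \<Union>i\<in>D k. C k i) {1..K-1}
           (\<lambda>p. if p = K - 1 then {K-1, K} else {p})
           (\<lambda>p. if p = K - 1 then lam (K-1) + lam K else lam p)
         - lagr_relax c K (\<lambda>k. \<Union>i\<in>D k. C k i) lam \<ge> 0"
proof -
  define F where "F = (\<lambda>k. \<Union>i\<in>D k. C k i)"
  define J where "J = (\<lambda>p::nat. if p = K - 1 then {K-1, K} else {p})"
  define mu where "mu = (\<lambda>p. if p = K - 1 then lam (K-1) + lam K else lam p)"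
  have F_compact: "\<forall>k\<in>{1..K}. compact (F k)"
    using assms(2,3) by (auto simp: F_def)
  have J_partition: "\<forall>p\<in>{1..K-1}. finite (J p)" "disjoint_family_on J {1..K-1}"
    "(\<Union>p\<in>{1..K-1}. J p) = {1..K}" "\<forall>p\<in>{1..K-1}. mu p = (\<Sum>k\<in>J p. lam k)"
    using assms(1) by (auto simp: J_def mu_def disjoint_family_on_def)
  have merged: "(\<lambda>p. \<Inter>k\<in>J p. F k) = (\<lambda>k. if k = K - 1 then F (K-1) \<inter> F K else F k)"
    by (rule ext) (simp add: J_def)
  note bounds = partition_relaxation_bounds[OF F_compact assms(4)[folded F_def] finite_atLeastAtMost
      J_partition]
  have "\<bar>hull_relax c {1..K} F\<bar> \<noteq> \<infinity>"
    using assms(4)[folded F_def] unfolding optimal_hull_multipliers_def by (rule conjunct1)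
  from ereal_diff_chain[OF this bounds[unfolded merged]] show ?thesis
    unfolding F_def J_def mu_def .
qed

end
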